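(* Let $a$ be a positive real number. For $n\ge1$ let $D_n(a,1)$ be the $n\times n$ matrix whose $(i,j)$ entry is $-a$ if $i=j$, $1$ if $j=i+1$, $a$ if $i=j+1$, $-1$ if $i=j+2$, and $0$ otherwise; set $d_{-1}=0$, $d_0=1$ and $d_n=|D_n(a,1)|$ for $n\ge1$. Let $E_n(a,1)$ be the $(n+1)\times n$ matrix whose $(i,j)$ entry is $-a$ if $i=j$, $1$ if $j=i+1$, $a$ if $i=j+1$, $-1$ if $i=j+2$, and $0$ otherwise, and for $1\le k\le n+1$ let $E_n^k(a,1)$ be obtained from $E_n(a,1)$ by deleting its $k$-th row. Then for $1\le k\le n+1$, $$|E_n^k(a,1)|=(-1)^{n-k+1}(d_{k-1}d_{n-k+1}-d_{k-2}d_{n-k}),$$ and for every $k\ge0$, $$d_k=\frac{1}{k!}\frac{d^k}{dx^k}\left(\frac{1}{1+ax+ax^2+x^3}\right)\Big|_{x=0}.$$ Moreover, if $x^3+ax^2+ax+1=0$ has three distinct (complex) solutions $\alpha,\beta,\gamma$, then for $k\ge1$ $$d_k=\frac{1}{\alpha^{k+1}(\alpha-\beta)(\gamma-\alpha)}+\frac{1}{\beta^{k+1}(\alpha-\beta)(\beta-\gamma)}+\frac{1}{\gamma^{k+1}(\gamma-\alpha)(\beta-\gamma)}.$$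
   Context: $|M|$ denotes the determinant of a square matrix $M$. *)

theory Defs
  imports Complex_Main "HOL-Analysis.Derivative" "Jordan_Normal_Form.Determinant"
begin

definition band_entry :: "real \<Rightarrow> nat \<Rightarrow> nat \<Rightarrow> real" where
  "band_entry a i j =
     (if i = j then - a
      else if j = i + 1 then 1
      else if i = j + 1 then a
      else if i = j + 2 then -1
      else 0)"

(* D_n(a,1): n x n matrix (JNF matrices are 0-based, so shift indices by 1) *)
definition Dmat :: "real \<Rightarrow> nat \<Rightarrow> real mat" where
  "Dmat a n = mat n n (\<lambda>(i, j). band_entry a (i + 1) (j + 1))"

definition Emat :: "real \<Rightarrow> nat \<Rightarrow> real mat" where
  "Emat a n = mat (n + 1) n (\<lambda>(i, j). band_entry a (i + 1) (j + 1))"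

(* delete the k-th row (1-based) of a matrix *)
definition delete_row :: "'a mat \<Rightarrow> nat \<Rightarrow> 'a mat" where
  "delete_row A k = mat (dim_row A - 1) (dim_col A)
      (\<lambda>(i, j). A $$ (if i + 1 < k then i else i + 1, j))"

definition Ekmat :: "real \<Rightarrow> nat \<Rightarrow> nat \<Rightarrow> real mat" where
  "Ekmat a n k = delete_row (Emat a n) k"

definition dseq :: "real \<Rightarrow> int \<Rightarrow> real" where
  "dseq a m = (if m < 0 then 0 else if m = 0 then 1 else det (Dmat a (nat m)))"

end

theory Submission
  imports Defs "HOL-Analysis.FPS_Convergence"
begin

text \<open>Deleting the \<open>k\<close>-th row of \<open>E\<^sub>n\<close> leaves two diagonal blocks, \<open>D\<^sub>k\<^sub>-\<^sub>1\<close> and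
  the negated transpose of \<open>D\<^sub>n\<^sub>-\<^sub>k\<^sub>+\<^sub>1\<close>, coupled only by the two entries next to the
  diagonal where they meet; a row split and two one-entry expansions turn this into the product
  formula. For \<open>k = n\<close> it evaluates the cofactor in the expansion of \<open>D\<^sub>n\<^sub>+\<^sub>1\<close> along its last
  column, which gives \<open>d\<^sub>m\<^sub>+\<^sub>3 = -a d\<^sub>m\<^sub>+\<^sub>2 - a d\<^sub>m\<^sub>+\<^sub>1 - d\<^sub>m\<close> for all \<open>m \<ge> -2\<close>. Hence
  \<open>(1 + a x + a x\<^sup>2 + x\<^sup>3) \<Sum> d\<^sub>k x\<^sup>k = 1\<close>, which gives the Taylor coefficients; and the
  divided difference of \<open>x\<^sup>k\<^sup>+\<^sup>2\<close> at the reciprocals of the roots (again roots of the same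
  palindromic cubic) obeys the same recurrence with the same initial values \<open>0, 0, 1\<close>.\<close>

section \<open>Determinants of block matrices\<close>

lemma det_expand_row_support:
  assumes A: "A \<in> carrier_mat n n" and r: "r < n" and S: "S \<subseteq> {..<n}"
    and zero: "\<And>j. j < n \<Longrightarrow> j \<notin> S \<Longrightarrow> A $$ (r, j) = 0"
  shows "det A = (\<Sum>j\<in>S. A $$ (r, j) * cofactor A r j)"
proof -
  have "det A = (\<Sum>j<n. A $$ (r, j) * cofactor A r j)"
    by (rule laplace_expansion_row[OF A r])
  also have "\<dots> = (\<Sum>j\<in>S. A $$ (r, j) * cofactor A r j)"
    by (rule sum.mono_neutral_right) (use S zero in auto)
  finally show ?thesis .
qed

lemma det_expand_col_support:
  assumes A: "A \<in> carrier_mat n n" and c: "c < n" and S: "S \<subseteq> {..<n}"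
    and zero: "\<And>i. i < n \<Longrightarrow> i \<notin> S \<Longrightarrow> A $$ (i, c) = 0"
  shows "det A = (\<Sum>i\<in>S. A $$ (i, c) * cofactor A i c)"
proof -
  have "det A = (\<Sum>i<n. A $$ (i, c) * cofactor A i c)"
    by (rule laplace_expansion_column[OF A c])
  also have "\<dots> = (\<Sum>i\<in>S. A $$ (i, c) * cofactor A i c)"
    by (rule sum.mono_neutral_right) (use S zero in auto)
  finally show ?thesis .
qed

lemma det_single_entry_row:
  assumes A: "A \<in> carrier_mat n n" and r: "r < n" and c: "c < n"
    and zero: "\<And>j. j < n \<Longrightarrow> j \<noteq> c \<Longrightarrow> A $$ (r, j) = 0"
  shows "det A = A $$ (r, c) * cofactor A r c"
  using det_expand_row_support[OF A r, of "{c}"] c zero by auto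

lemma cofactor_cong_row:
  assumes A: "A \<in> carrier_mat n n" and B: "B \<in> carrier_mat n n"
    and agree: "\<And>i j. i < n \<Longrightarrow> j < n \<Longrightarrow> i \<noteq> r \<Longrightarrow> A $$ (i, j) = B $$ (i, j)"
  shows "cofactor A r c = cofactor B r c"
proof -
  have "mat_delete A r c = mat_delete B r c"
    using A B by (intro eq_matI) (auto simp: mat_delete_def intro!: agree insert_index)
  then show ?thesis
    by (simp add: cofactor_def)
qed

lemma det_row_split:
  assumes A: "A \<in> carrier_mat n n" and B: "B \<in> carrier_mat n n" and C: "C \<in> carrier_mat n n"
    and r: "r < n"
    and agree: "\<And>i j. i < n \<Longrightarrow> j < n \<Longrightarrow> i \<noteq> r \<Longrightarrow> B $$ (i, j) = A $$ (i, j) \<and> C $$ (i, j) = A $$ (i, j)"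
    and split: "\<And>j. j < n \<Longrightarrow> A $$ (r, j) = B $$ (r, j) + C $$ (r, j)"
  shows "det A = det B + det C"
proof -
  have cof: "cofactor B r j = cofactor A r j" "cofactor C r j = cofactor A r j" for j
    using agree by (auto intro!: cofactor_cong_row[OF B A] cofactor_cong_row[OF C A])
  have "det A = (\<Sum>j<n. A $$ (r, j) * cofactor A r j)"
    by (rule laplace_expansion_row[OF A r])
  also have "\<dots> = (\<Sum>j<n. B $$ (r, j) * cofactor B r j) + (\<Sum>j<n. C $$ (r, j) * cofactor C r j)"
    by (simp add: cof split distrib_right sum.distrib)
  also have "\<dots> = det B + det C"
    by (simp add: laplace_expansion_row[OF B r] laplace_expansion_row[OF C r])
  finally show ?thesis .
qed

definition diag_block :: "'a mat \<Rightarrow> nat \<Rightarrow> nat \<Rightarrow> 'a mat" where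
  "diag_block A s m = mat m m (\<lambda>(i, j). A $$ (i + s, j + s))"

lemma diag_block_carrier [simp]: "diag_block A s m \<in> carrier_mat m m"
  by (simp add: diag_block_def)

lemma diag_block_full: "A \<in> carrier_mat n n \<Longrightarrow> diag_block A 0 n = A"
  by (intro eq_matI) (auto simp: diag_block_def)

lemma det_block_upper_triangular:
  fixes A :: "'a :: idom mat"
  assumes A: "A \<in> carrier_mat n n" and p: "p \<le> n"
    and zero: "\<And>i j. p \<le> i \<Longrightarrow> i < n \<Longrightarrow> j < p \<Longrightarrow> A $$ (i, j) = 0"
  shows "det A = det (diag_block A 0 p) * det (diag_block A p (n - p))"
proof -
  have "A = four_block_mat (diag_block A 0 p) (mat p (n - p) (\<lambda>(i, j). A $$ (i, j + p)))
      (0\<^sub>m (n - p) p) (diag_block A p (n - p))"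
    using A p by (intro eq_matI) (auto simp: four_block_mat_def diag_block_def zero)
  then show ?thesis
    by (metis det_four_block_mat_lower_left_zero diag_block_carrier mat_carrier)
qed

lemma det_block_lower_triangular:
  fixes A :: "'a :: idom mat"
  assumes A: "A \<in> carrier_mat n n" and p: "p \<le> n"
    and zero: "\<And>i j. i < p \<Longrightarrow> p \<le> j \<Longrightarrow> j < n \<Longrightarrow> A $$ (i, j) = 0"
  shows "det A = det (diag_block A 0 p) * det (diag_block A p (n - p))"
proof -
  have "A = four_block_mat (diag_block A 0 p) (0\<^sub>m p (n - p))
      (mat (n - p) p (\<lambda>(i, j). A $$ (i + p, j))) (diag_block A p (n - p))"
    using A p by (intro eq_matI) (auto simp: four_block_mat_def diag_block_def zero)
  then show ?thesis
    by (metis det_four_block_mat_upper_right_zero diag_block_carrier mat_carrier)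
qed

lemma det_corner_coupled_blocks:
  fixes M :: "'a :: idom mat"
  assumes M: "M \<in> carrier_mat n n" and p: "0 < p" "p < n"
    and upper: "\<And>i j. i < p \<Longrightarrow> p \<le> j \<Longrightarrow> j < n \<Longrightarrow> (i, j) \<noteq> (p - 1, p) \<Longrightarrow> M $$ (i, j) = 0"
    and lower: "\<And>i j. p \<le> i \<Longrightarrow> i < n \<Longrightarrow> j < p \<Longrightarrow> (i, j) \<noteq> (p, p - 1) \<Longrightarrow> M $$ (i, j) = 0"
  shows "det M = det (diag_block M 0 p) * det (diag_block M p (n - p))
    - M $$ (p - 1, p) * M $$ (p, p - 1) * det (diag_block M 0 (p - 1)) * det (diag_block M (p + 1) (n - p - 1))"
proof -
  define r where "r = p - 1"
  have rp: "p = r + 1" "r < n" using p by (auto simp: r_def)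
  define M0 where "M0 = mat n n (\<lambda>(i, j). if (i, j) = (r, p) then 0 else M $$ (i, j))"
  define M1 where "M1 = mat n n (\<lambda>(i, j). if i = r then (if j = p then M $$ (r, p) else 0) else M $$ (i, j))"
  have "det M = det M0 + det M1"
    by (rule det_row_split[OF M _ _ rp(2)]) (use rp in \<open>auto simp: M0_def M1_def\<close>)
  moreover have "det M0 = det (diag_block M 0 p) * det (diag_block M p (n - p))"
  proof -
    have "det M0 = det (diag_block M0 0 p) * det (diag_block M0 p (n - p))"
      by (rule det_block_lower_triangular) (use p in \<open>auto simp: M0_def r_def upper\<close>)
    moreover have "diag_block M0 0 p = diag_block M 0 p" "diag_block M0 p (n - p) = diag_block M p (n - p)"
      using rp by (auto simp: diag_block_def M0_def intro!: eq_matI)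
    ultimately show ?thesis by simp
  qed
  moreover have "det M1 = - M $$ (r, p) * M $$ (p, r) * det (diag_block M 0 r) * det (diag_block M (p + 1) (n - p - 1))"
  proof -
    define N where "N = mat_delete M1 r p"
    have N: "N \<in> carrier_mat (n - 1) (n - 1)"
      by (simp add: N_def M1_def mat_delete_def)
    have N_entry: "N $$ (i, j) = M1 $$ (if i < r then i else i + 1, if j < p then j else j + 1)"
      if "i < n - 1" "j < n - 1" for i j
      using that by (simp add: N_def mat_delete_def M1_def insert_index_def)
    have "det M1 = M $$ (r, p) * cofactor M1 r p"
      using det_single_entry_row[of M1 n r p] rp p by (simp add: M1_def)
    also have "cofactor M1 r p = - det N"
      by (simp add: cofactor_def N_def rp(1))
    also have "det N = det (diag_block N 0 p) * det (diag_block N p (n - 1 - p))"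
      by (rule det_block_upper_triangular[OF N]) (use p rp in \<open>auto simp: N_entry M1_def intro!: lower\<close>)
    also have "diag_block N p (n - 1 - p) = diag_block M (p + 1) (n - p - 1)"
      using rp by (intro eq_matI) (auto simp: diag_block_def N_entry M1_def)
    also have "det (diag_block N 0 p) = M $$ (p, r) * det (diag_block M 0 r)"
    proof -
      define K where "K = diag_block N 0 p"
      have "det K = K $$ (r, r) * cofactor K r r"
        by (rule det_single_entry_row[of K p]) (use p rp in \<open>auto simp: K_def diag_block_def N_entry M1_def intro!: lower\<close>)
      moreover have "mat_delete K r r = diag_block M 0 r"
        using rp by (intro eq_matI) (auto simp: K_def mat_delete_def diag_block_def N_entry M1_def insert_index_def)
      moreover have "K $$ (r, r) = M $$ (p, r)"
        using rp p by (simp add: K_def diag_block_def N_entry M1_def)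
      ultimately show ?thesis
        by (simp add: K_def cofactor_def)
    qed
    finally show ?thesis by simp
  qed
  ultimately show ?thesis unfolding r_def by (simp add: algebra_simps)
qed

section \<open>The band matrices \<open>D\<^sub>n\<close> and \<open>E\<^sub>n\<^sup>k\<close>\<close>

definition toeplitz_mat :: "nat \<Rightarrow> (int \<Rightarrow> 'a) \<Rightarrow> 'a mat" where
  "toeplitz_mat m c = mat m m (\<lambda>(i, j). c (int i - int j))"

definition band_coeff :: "real \<Rightarrow> int \<Rightarrow> real" where
  "band_coeff a d = (if d = 0 then - a else if d = -1 then 1 else if d = 1 then a else if d = 2 then -1 else 0)"

lemma band_entry_eq_band_coeff: "band_entry a i j = band_coeff a (int i - int j)"
  unfolding band_entry_def band_coeff_def by auto

lemma Dmat_eq_toeplitz: "Dmat a m = toeplitz_mat m (band_coeff a)"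
  unfolding Dmat_def toeplitz_mat_def by (intro eq_matI) (auto simp: band_entry_eq_band_coeff)

lemma dseq_of_nat: "dseq a (int m) = det (Dmat a m)"
  by (cases "m = 0") (auto simp: dseq_def Dmat_def)

lemma dseq_0 [simp]: "dseq a 0 = 1"
  by (simp add: dseq_def)

lemma dseq_neg: "m < 0 \<Longrightarrow> dseq a m = 0"
  by (simp add: dseq_def)

lemma det_toeplitz_shifted_band: "det (toeplitz_mat m (\<lambda>d. band_coeff a (d + 1))) = (-1) ^ m * det (Dmat a m)"
proof -
  have "toeplitz_mat m (\<lambda>d. band_coeff a (d + 1)) = (-1) \<cdot>\<^sub>m transpose_mat (Dmat a m)"
    unfolding Dmat_eq_toeplitz toeplitz_mat_def by (intro eq_matI) (auto simp: band_coeff_def)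
  then show ?thesis
    by (simp add: det_transpose[of _ m] Dmat_def)
qed

lemma Ekmat_eq:
  "p \<le> n \<Longrightarrow> Ekmat a n (Suc p) = mat n n (\<lambda>(i, j). band_coeff a (int (if i < p then i else i + 1) - int j))"
  unfolding Ekmat_def delete_row_def Emat_def by (intro eq_matI) (auto simp: band_entry_eq_band_coeff)

lemma Ekmat_carrier: "p \<le> n \<Longrightarrow> Ekmat a n (Suc p) \<in> carrier_mat n n"
  by (simp add: Ekmat_eq)

lemma diag_block_Ekmat_upper:
  assumes "m \<le> p" "p \<le> n"
  shows "diag_block (Ekmat a n (Suc p)) 0 m = Dmat a m"
  unfolding Ekmat_eq[OF assms(2)] using assms
  by (intro eq_matI) (auto simp: diag_block_def Dmat_eq_toeplitz toeplitz_mat_def)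

lemma diag_block_Ekmat_lower:
  assumes "p \<le> s" "s + m \<le> n"
  shows "diag_block (Ekmat a n (Suc p)) s m = toeplitz_mat m (\<lambda>d. band_coeff a (d + 1))"
proof -
  have "p \<le> n"
    using assms by simp
  then show ?thesis
    unfolding Ekmat_eq[OF \<open>p \<le> n\<close>] using assms
    by (intro eq_matI) (auto simp: diag_block_def toeplitz_mat_def algebra_simps)
qed

lemma det_Ekmat:
  assumes "p \<le> n"
  shows "det (Ekmat a n (Suc p)) = (-1) ^ (n - p) *
    (dseq a (int p) * dseq a (int n - int p) - dseq a (int p - 1) * dseq a (int n - int p - 1))"
proof -
  consider "p = 0" | "p = n" | "0 < p" "p < n"
    using assms by linarith
  then show ?thesis
  proof cases
    case 1
    have "Ekmat a n (Suc p) = toeplitz_mat n (\<lambda>d. band_coeff a (d + 1))"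
      using diag_block_Ekmat_lower[of p 0 n n a] diag_block_full[OF Ekmat_carrier[OF assms]] 1
      by simp
    then show ?thesis
      using 1 by (simp add: det_toeplitz_shifted_band dseq_of_nat dseq_neg)
  next
    case 2
    have "Ekmat a n (Suc p) = Dmat a n"
      using diag_block_Ekmat_upper[of n p n a] diag_block_full[OF Ekmat_carrier[OF assms]] 2
      by simp
    then show ?thesis
      using 2 by (simp add: dseq_of_nat dseq_neg)
  next
    case 3
    let ?E = "Ekmat a n (Suc p)"
    let ?T = "\<lambda>m. toeplitz_mat m (\<lambda>d. band_coeff a (d + 1))"
    have corners: "?E $$ (p - 1, p) = 1" "?E $$ (p, p - 1) = -1"
      using 3 by (auto simp: Ekmat_eq[OF assms] band_coeff_def)
    have blocks: "diag_block ?E 0 p = Dmat a p" "diag_block ?E 0 (p - 1) = Dmat a (p - 1)"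
        "diag_block ?E p (n - p) = ?T (n - p)" "diag_block ?E (p + 1) (n - p - 1) = ?T (n - p - 1)"
      using 3 diag_block_Ekmat_upper[of p p n a] diag_block_Ekmat_upper[of "p - 1" p n a]
        diag_block_Ekmat_lower[of p p "n - p" n a] diag_block_Ekmat_lower[of p "p + 1" "n - p - 1" n a]
      by simp_all
    have sign: "(-1 :: real) ^ (n - p - 1) = - ((-1) ^ (n - p))"
      using 3 by (cases "n - p") auto
    have "det ?E = det (diag_block ?E 0 p) * det (diag_block ?E p (n - p))
        - ?E $$ (p - 1, p) * ?E $$ (p, p - 1) * det (diag_block ?E 0 (p - 1)) * det (diag_block ?E (p + 1) (n - p - 1))"
      by (rule det_corner_coupled_blocks) (use 3 in \<open>auto simp: Ekmat_eq[OF assms] band_coeff_def\<close>)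
    then have det_E: "det ?E = det (Dmat a p) * ((-1) ^ (n - p) * det (Dmat a (n - p)))
        - det (Dmat a (p - 1)) * ((-1) ^ (n - p) * det (Dmat a (n - p - 1)))"
      unfolding blocks corners det_toeplitz_shifted_band sign by simp
    have dseq_conv: "dseq a (int n - int p) = det (Dmat a (n - p))" "dseq a (int p - 1) = det (Dmat a (p - 1))"
        "dseq a (int n - int p - 1) = det (Dmat a (n - p - 1))"
      using 3 by (simp_all add: dseq_of_nat[symmetric] of_nat_diff algebra_simps)
    show ?thesis
      unfolding det_E dseq_conv dseq_of_nat by (simp add: algebra_simps)
  qed
qed

lemma dseq_1: "dseq a 1 = - a"
proof -
  have "dseq a 1 = det (Dmat a 1)"
    using dseq_of_nat[of a 1] by simp
  also have "\<dots> = - a"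
    by (simp add: det_single Dmat_def band_entry_def)
  finally show ?thesis .
qed

lemma det_Dmat_Suc:
  assumes "1 \<le> n"
  shows "det (Dmat a (Suc n)) = - a * det (Dmat a n) - det (Ekmat a n n)"
proof -
  let ?D = "Dmat a (Suc n)"
  have "det ?D = (\<Sum>i\<in>{n - 1, n}. ?D $$ (i, n) * cofactor ?D i n)"
    by (rule det_expand_col_support[where n = "Suc n"]) (auto simp: Dmat_eq_toeplitz toeplitz_mat_def band_coeff_def)
  also have "\<dots> = cofactor ?D (n - 1) n - a * cofactor ?D n n"
    using assms by (auto simp: Dmat_eq_toeplitz toeplitz_mat_def band_coeff_def)
  also have "mat_delete ?D n n = Dmat a n"
    by (intro eq_matI) (auto simp: Dmat_eq_toeplitz toeplitz_mat_def mat_delete_def)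
  moreover have "mat_delete ?D (n - 1) n = Ekmat a n n"
    using assms Ekmat_eq[of "n - 1" n a]
    by (intro eq_matI) (auto simp: Dmat_eq_toeplitz toeplitz_mat_def mat_delete_def insert_index_def)
  moreover have "(-1 :: real) ^ (n - 1 + n) = -1"
    using assms by (cases n) auto
  ultimately show ?thesis
    by (simp add: cofactor_def)
qed

lemma dseq_rec:
  assumes "m \<ge> -2"
  shows "dseq a (m + 3) = - a * dseq a (m + 2) - a * dseq a (m + 1) - dseq a m"
proof -
  define n where "n = nat (m + 2)"
  have n: "m + 2 = int n"
    using assms by (simp add: n_def)
  show ?thesis
  proof (cases n)
    case 0
    then have "m = -2" using n by simp
    then show ?thesis by (simp add: dseq_1 dseq_neg)
  next
    case (Suc p)
    then have m: "m = int p - 1"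
      using n by simp
    have "dseq a (int (Suc n)) = - a * det (Dmat a n) - det (Ekmat a n (Suc p))"
      unfolding dseq_of_nat using det_Dmat_Suc[of n a] Suc by simp
    moreover have "det (Ekmat a n (Suc p)) = - (dseq a (int p) * dseq a 1 - dseq a (int p - 1))"
      using det_Ekmat[of p n a] Suc by simp
    ultimately show ?thesis
      unfolding m using Suc by (simp add: dseq_1 dseq_of_nat[symmetric] algebra_simps)
  qed
qed

section \<open>Generating function\<close>

lemma fps_nth_eq_higher_deriv:
  fixes F :: "'a :: {banach, real_normed_field} fps"
  assumes "f has_fps_expansion F"
  shows "fps_nth F n = (deriv ^^ n) f 0 / fact n"
proof -
  have "(deriv ^^ n) f has_fps_expansion (fps_deriv ^^ n) F"
    using assms by (induction n) (auto intro: has_fps_expansion_deriv)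
  then have "(deriv ^^ n) f 0 = fps_nth ((fps_deriv ^^ n) F) 0"
    by (auto simp: has_fps_expansion_def eval_fps_at_0 dest: eventually_nhds_x_imp_x)
  then show ?thesis
    by (simp add: fps_0th_higher_deriv)
qed

lemma fps_X_power_mult_dseq_nth:
  "fps_nth (fps_X ^ j * Abs_fps (\<lambda>k. dseq a (int k))) n = dseq a (int n - int j)"
  by (simp add: fps_X_power_mult_nth dseq_neg of_nat_diff)

lemma dseq_fps_inverse:
  "(1 + fps_const a * fps_X + fps_const a * fps_X ^ 2 + fps_X ^ 3) * Abs_fps (\<lambda>k. dseq a (int k)) = 1"
proof (rule fps_ext)
  fix n
  let ?D = "Abs_fps (\<lambda>k. dseq a (int k))"
  have "fps_nth ((1 + fps_const a * fps_X + fps_const a * fps_X ^ 2 + fps_X ^ 3) * ?D) n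
      = dseq a (int n) + a * dseq a (int n - 1) + a * dseq a (int n - 2) + dseq a (int n - 3)"
    using fps_X_power_mult_dseq_nth[of 1 a n] fps_X_power_mult_dseq_nth[of 2 a n] fps_X_power_mult_dseq_nth[of 3 a n]
    by (simp add: algebra_simps dseq_neg)
  also have "\<dots> = (if n = 0 then 1 else 0)"
    using dseq_rec[of "int n - 3" a] by (auto simp: dseq_neg)
  finally show "fps_nth ((1 + fps_const a * fps_X + fps_const a * fps_X ^ 2 + fps_X ^ 3) * ?D) n = fps_nth 1 n"
    by simp
qed

lemma dseq_eq_higher_deriv:
  "dseq a (int k) = (deriv ^^ k) (\<lambda>x::real. 1 / (1 + a * x + a * x ^ 2 + x ^ 3)) 0 / fact k"
proof -
  let ?P = "1 + fps_const a * fps_X + fps_const a * fps_X ^ 2 + fps_X ^ 3 :: real fps"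
  have "(\<lambda>x::real. 1 + a * x + a * x ^ 2 + x ^ 3) has_fps_expansion ?P"
    by (intro fps_expansion_intros)
  then have "(\<lambda>x::real. inverse (1 + a * x + a * x ^ 2 + x ^ 3)) has_fps_expansion inverse ?P"
    by (rule has_fps_expansion_inverse) simp
  also have "inverse ?P = Abs_fps (\<lambda>k. dseq a (int k))"
    by (rule fps_inverse_unique[OF dseq_fps_inverse])
  finally have "(\<lambda>x::real. 1 / (1 + a * x + a * x ^ 2 + x ^ 3)) has_fps_expansion Abs_fps (\<lambda>k. dseq a (int k))"
    by (simp add: inverse_eq_divide)
  from fps_nth_eq_higher_deriv[OF this, of k] show ?thesis
    by simp
qed

section \<open>Closed form\<close>

lemma monic_cubic_vieta:
  fixes u v w p q r :: "'a :: idom"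
  assumes u: "u ^ 3 + p * u ^ 2 + q * u + r = 0"
    and v: "v ^ 3 + p * v ^ 2 + q * v + r = 0"
    and w: "w ^ 3 + p * w ^ 2 + q * w + r = 0"
    and distinct: "u \<noteq> v" "v \<noteq> w" "u \<noteq> w"
  shows "u + v + w = - p" "u * v + v * w + w * u = q" "u * v * w = - r"
proof -
  have "(u - v) * (u ^ 2 + u * v + v ^ 2 + p * (u + v) + q)
      = (u ^ 3 + p * u ^ 2 + q * u + r) - (v ^ 3 + p * v ^ 2 + q * v + r)"
    by (simp add: algebra_simps power2_eq_square power3_eq_cube)
  then have uv: "u ^ 2 + u * v + v ^ 2 + p * (u + v) + q = 0"
    using u v distinct by simp
  have "(v - w) * (v ^ 2 + v * w + w ^ 2 + p * (v + w) + q)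
      = (v ^ 3 + p * v ^ 2 + q * v + r) - (w ^ 3 + p * w ^ 2 + q * w + r)"
    by (simp add: algebra_simps power2_eq_square power3_eq_cube)
  then have vw: "v ^ 2 + v * w + w ^ 2 + p * (v + w) + q = 0"
    using v w distinct by simp
  have "(u - w) * (u + v + w + p)
      = (u ^ 2 + u * v + v ^ 2 + p * (u + v) + q) - (v ^ 2 + v * w + w ^ 2 + p * (v + w) + q)"
    by (simp add: algebra_simps power2_eq_square)
  then have e1: "u + v + w + p = 0"
    using uv vw distinct by simp
  then show "u + v + w = - p"
    by (simp add: eq_neg_iff_add_eq_0)
  have "u * v + v * w + w * u - q = (u + v) * (u + v + w + p) - (u ^ 2 + u * v + v ^ 2 + p * (u + v) + q)"
    by (simp add: algebra_simps power2_eq_square)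
  then show e2: "u * v + v * w + w * u = q"
    using e1 uv by simp
  have "u * v * w + r = (u ^ 3 + p * u ^ 2 + q * u + r) - (u + v + w + p) * u ^ 2 + (u * v + v * w + w * u - q) * u"
    by (simp add: algebra_simps power2_eq_square power3_eq_cube)
  then show "u * v * w = - r"
    using u e1 e2 by (simp add: eq_neg_iff_add_eq_0)
qed

text \<open>The divided difference of \<open>x ^ j\<close> at \<open>u, v, w\<close>, i.e. the complete homogeneous symmetric
  polynomial of degree \<open>j - 2\<close> in \<open>u, v, w\<close>.\<close>
definition divdiff_power :: "'a :: field \<Rightarrow> 'a \<Rightarrow> 'a \<Rightarrow> nat \<Rightarrow> 'a" where
  "divdiff_power u v w j = u ^ j / ((u - v) * (u - w)) + v ^ j / ((v - u) * (v - w)) + w ^ j / ((w - u) * (w - v))"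

lemma divdiff_power_eq_fraction:
  assumes "u \<noteq> v" "v \<noteq> w" "u \<noteq> w"
  shows "divdiff_power u v w j = - (u ^ j * (v - w) + v ^ j * (w - u) + w ^ j * (u - v)) / ((u - v) * (v - w) * (w - u))"
proof -
  have frac: "x ^ j / ((x - y) * (x - z)) = - (x ^ j * (y - z)) / ((x - y) * (y - z) * (z - x))"
    if "x \<noteq> y" "y \<noteq> z" "x \<noteq> z" for x y z :: 'a
  proof -
    have "(x - y) * (x - z) \<noteq> 0" "(x - y) * (y - z) * (z - x) \<noteq> 0"
      using that by auto
    moreover have "x ^ j * ((x - y) * (y - z) * (z - x)) = - (x ^ j * (y - z)) * ((x - y) * (x - z))"
      by (simp add: algebra_simps)
    ultimately show ?thesis
      by (metis frac_eq_eq)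
  qed
  have "divdiff_power u v w j = - (u ^ j * (v - w)) / ((u - v) * (v - w) * (w - u))
      + - (v ^ j * (w - u)) / ((u - v) * (v - w) * (w - u)) + - (w ^ j * (u - v)) / ((u - v) * (v - w) * (w - u))"
    unfolding divdiff_power_def using frac[of u v w] frac[of v w u] frac[of w u v] assms by (simp add: ac_simps)
  then show ?thesis
    by (simp only: minus_add_distrib add_divide_distrib)
qed

lemma divdiff_power_initial:
  assumes "u \<noteq> v" "v \<noteq> w" "u \<noteq> w"
  shows "divdiff_power u v w 0 = 0" "divdiff_power u v w 1 = 0" "divdiff_power u v w 2 = 1"
proof -
  have "(u - v) * (v - w) * (w - u) \<noteq> 0"
    using assms by auto
  moreover have "u ^ 2 * (v - w) + v ^ 2 * (w - u) + w ^ 2 * (u - v) = - ((u - v) * (v - w) * (w - u))"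
    by (simp add: algebra_simps power2_eq_square)
  ultimately show "divdiff_power u v w 0 = 0" "divdiff_power u v w 1 = 0" "divdiff_power u v w 2 = 1"
    unfolding divdiff_power_eq_fraction[OF assms] by (simp_all add: algebra_simps)
qed

lemma divdiff_power_rec:
  "divdiff_power u v w (j + 3) = (u + v + w) * divdiff_power u v w (j + 2)
    - (u * v + v * w + w * u) * divdiff_power u v w (j + 1) + u * v * w * divdiff_power u v w j"
proof -
  have root: "x ^ (j + 3) = (u + v + w) * x ^ (j + 2) - (u * v + v * w + w * u) * x ^ (j + 1) + u * v * w * x ^ j"
    if "(x - u) * (x - v) * (x - w) = 0" for x
  proof -
    have "x ^ (j + 3) - ((u + v + w) * x ^ (j + 2) - (u * v + v * w + w * u) * x ^ (j + 1) + u * v * w * x ^ j)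
        = x ^ j * ((x - u) * (x - v) * (x - w))"
      by (simp add: algebra_simps power_add power2_eq_square power3_eq_cube)
    then show ?thesis
      using that by simp
  qed
  have "u ^ (j + 3) = (u + v + w) * u ^ (j + 2) - (u * v + v * w + w * u) * u ^ (j + 1) + u * v * w * u ^ j"
      "v ^ (j + 3) = (u + v + w) * v ^ (j + 2) - (u * v + v * w + w * u) * v ^ (j + 1) + u * v * w * v ^ j"
      "w ^ (j + 3) = (u + v + w) * w ^ (j + 2) - (u * v + v * w + w * u) * w ^ (j + 1) + u * v * w * w ^ j"
    by (rule root; simp)+
  then show ?thesis
    unfolding divdiff_power_def by (simp add: add_divide_distrib diff_divide_distrib algebra_simps)
qed

lemma linear_recurrence3_unique:
  fixes x y :: "nat \<Rightarrow> 'a :: semiring"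
  assumes x: "\<And>j. x (j + 3) = p * x (j + 2) + q * x (j + 1) + r * x j"
    and y: "\<And>j. y (j + 3) = p * y (j + 2) + q * y (j + 1) + r * y j"
    and initial: "x 0 = y 0" "x 1 = y 1" "x 2 = y 2"
  shows "x j = y j"
proof (induction j rule: less_induct)
  case (less j)
  show ?case
  proof (cases "j < 3")
    case True
    then consider "j = 0" | "j = 1" | "j = 2"
      by linarith
    then show ?thesis
      by cases (use initial in simp_all)
  next
    case False
    then obtain i where "j = i + 3"
      by (metis add.commute le_Suc_ex not_less)
    then show ?thesis
      using less x y by simp
  qed
qed

lemma palindromic_cubic_root_inverse:
  fixes x c :: "'a :: field"
  assumes "x ^ 3 + c * x ^ 2 + c * x + 1 = 0" "x \<noteq> 0"
  shows "(1 / x) ^ 3 + c * (1 / x) ^ 2 + c * (1 / x) + 1 = 0"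
proof -
  have "(1 / x) ^ 3 + c * (1 / x) ^ 2 + c * (1 / x) + 1 = (x ^ 3 + c * x ^ 2 + c * x + 1) / x ^ 3"
    using assms(2) by (simp add: field_simps power2_eq_square power3_eq_cube)
  then show ?thesis
    using assms(1) by simp
qed

lemma divdiff_power_inverse_term:
  fixes x y z :: "'a :: field"
  assumes "x * y * z = -1" "x \<noteq> y" "x \<noteq> z"
  shows "(1 / x) ^ (k + 2) / ((1 / x - 1 / y) * (1 / x - 1 / z)) = 1 / (x ^ (k + 1) * (x - y) * (z - x))"
proof -
  have nz: "x \<noteq> 0" "y \<noteq> 0" "z \<noteq> 0" "x - y \<noteq> 0" "z - x \<noteq> 0"
    using assms by auto
  have "1 / x - 1 / y = (y - x) / (x * y)" "1 / x - 1 / z = (z - x) / (x * z)"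
    using nz by (simp_all add: divide_simps)
  then have "(1 / x) ^ (k + 2) / ((1 / x - 1 / y) * (1 / x - 1 / z)) = (x * y * z) / (x ^ (k + 1) * (y - x) * (z - x))"
    using nz by (simp add: power_add power2_eq_square divide_simps)
  also have "\<dots> = 1 / (x ^ (k + 1) * (x - y) * (z - x))"
    using assms(1) nz by (simp add: divide_simps)
  finally show ?thesis .
qed

lemma dseq_eq_divdiff_power:
  fixes \<alpha> \<beta> \<gamma> :: complex
  assumes roots: "\<alpha> ^ 3 + a * \<alpha> ^ 2 + a * \<alpha> + 1 = 0" "\<beta> ^ 3 + a * \<beta> ^ 2 + a * \<beta> + 1 = 0"
      "\<gamma> ^ 3 + a * \<gamma> ^ 2 + a * \<gamma> + 1 = 0"
    and distinct: "\<alpha> \<noteq> \<beta>" "\<beta> \<noteq> \<gamma>" "\<alpha> \<noteq> \<gamma>"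
  shows "complex_of_real (dseq a (int k)) = divdiff_power (1 / \<alpha>) (1 / \<beta>) (1 / \<gamma>) (k + 2)"
proof -
  have "\<alpha> * \<beta> * \<gamma> = -1"
    using monic_cubic_vieta(3)[OF roots distinct] by simp
  then have nz: "\<alpha> \<noteq> 0" "\<beta> \<noteq> 0" "\<gamma> \<noteq> 0"
    by auto
  let ?u = "1 / \<alpha>" and ?v = "1 / \<beta>" and ?w = "1 / \<gamma>"
  have inv_roots: "?u ^ 3 + a * ?u ^ 2 + a * ?u + 1 = 0" "?v ^ 3 + a * ?v ^ 2 + a * ?v + 1 = 0"
      "?w ^ 3 + a * ?w ^ 2 + a * ?w + 1 = 0"
    using palindromic_cubic_root_inverse roots nz by blast+
  have inv_distinct: "?u \<noteq> ?v" "?v \<noteq> ?w" "?u \<noteq> ?w"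
    using distinct nz by (auto simp: divide_simps)
  note vieta = monic_cubic_vieta[OF inv_roots inv_distinct]
  have "complex_of_real (dseq a (int j - 2)) = divdiff_power ?u ?v ?w j" for j
  proof (rule linear_recurrence3_unique[where p = "- of_real a" and q = "- of_real a" and r = "-1"])
    show "complex_of_real (dseq a (int (j + 3) - 2))
        = - of_real a * of_real (dseq a (int (j + 2) - 2)) + - of_real a * of_real (dseq a (int (j + 1) - 2))
          + - 1 * of_real (dseq a (int j - 2))" for j
      using arg_cong[OF dseq_rec[of "int j - 2" a], of complex_of_real] by (simp add: algebra_simps)
    show "divdiff_power ?u ?v ?w (j + 3) = - of_real a * divdiff_power ?u ?v ?w (j + 2)
        + - of_real a * divdiff_power ?u ?v ?w (j + 1) + - 1 * divdiff_power ?u ?v ?w j" for j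
      by (simp only: divdiff_power_rec vieta) simp
  qed (use divdiff_power_initial[OF inv_distinct] dseq_neg in simp_all)
  from this[of "k + 2"] show ?thesis
    by simp
qed

lemma dseq_closed_form:
  fixes \<alpha> \<beta> \<gamma> :: complex
  assumes roots: "\<alpha> ^ 3 + a * \<alpha> ^ 2 + a * \<alpha> + 1 = 0" "\<beta> ^ 3 + a * \<beta> ^ 2 + a * \<beta> + 1 = 0"
      "\<gamma> ^ 3 + a * \<gamma> ^ 2 + a * \<gamma> + 1 = 0"
    and distinct: "\<alpha> \<noteq> \<beta>" "\<beta> \<noteq> \<gamma>" "\<alpha> \<noteq> \<gamma>"
  shows "complex_of_real (dseq a (int k)) =
      1 / (\<alpha> ^ (k + 1) * (\<alpha> - \<beta>) * (\<gamma> - \<alpha>))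
    + 1 / (\<beta> ^ (k + 1) * (\<alpha> - \<beta>) * (\<beta> - \<gamma>))
    + 1 / (\<gamma> ^ (k + 1) * (\<gamma> - \<alpha>) * (\<beta> - \<gamma>))"
proof -
  have prod: "\<alpha> * \<beta> * \<gamma> = -1" "\<beta> * \<alpha> * \<gamma> = -1" "\<gamma> * \<alpha> * \<beta> = -1"
    using monic_cubic_vieta(3)[OF roots distinct] by (simp_all add: ac_simps)
  have "(\<beta> - \<alpha>) * (\<gamma> - \<beta>) = (\<alpha> - \<beta>) * (\<beta> - \<gamma>)"
    by (simp add: algebra_simps)
  then show ?thesis
    unfolding dseq_eq_divdiff_power[OF roots distinct] divdiff_power_def
    using divdiff_power_inverse_term[OF prod(1) distinct(1,3)]
      divdiff_power_inverse_term[OF prod(2) distinct(1)[symmetric] distinct(2)]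
      divdiff_power_inverse_term[OF prod(3) distinct(3)[symmetric] distinct(2)[symmetric]]
    by (simp add: mult.assoc)
qed

theorem theorem2p3:
  fixes a :: real
  assumes "a > 0"
  shows "(\<forall>n k. n \<ge> 1 \<longrightarrow> 1 \<le> k \<longrightarrow> k \<le> n + 1 \<longrightarrow>
            det (Ekmat a n k) =
              (-1) ^ (n + 1 - k) *
                (dseq a (int k - 1) * dseq a (int n - int k + 1)
                 - dseq a (int k - 2) * dseq a (int n - int k)))
       \<and> (\<forall>k::nat. dseq a (int k) =
            (deriv ^^ k) (\<lambda>x::real. 1 / (1 + a * x + a * x ^ 2 + x ^ 3)) 0 / fact k)
       \<and> (\<forall>(\<alpha>::complex) (\<beta>::complex) (\<gamma>::complex).
            \<alpha> ^ 3 + a * \<alpha> ^ 2 + a * \<alpha> + 1 = 0 \<longrightarrow>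
            \<beta> ^ 3 + a * \<beta> ^ 2 + a * \<beta> + 1 = 0 \<longrightarrow>
            \<gamma> ^ 3 + a * \<gamma> ^ 2 + a * \<gamma> + 1 = 0 \<longrightarrow>
            \<alpha> \<noteq> \<beta> \<longrightarrow> \<beta> \<noteq> \<gamma> \<longrightarrow> \<alpha> \<noteq> \<gamma> \<longrightarrow>
            (\<forall>k::nat. k \<ge> 1 \<longrightarrow>
               complex_of_real (dseq a (int k)) =
                 1 / (\<alpha> ^ (k + 1) * (\<alpha> - \<beta>) * (\<gamma> - \<alpha>))
               + 1 / (\<beta> ^ (k + 1) * (\<alpha> - \<beta>) * (\<beta> - \<gamma>))
               + 1 / (\<gamma> ^ (k + 1) * (\<gamma> - \<alpha>) * (\<beta> - \<gamma>))))"
proof (intro conjI allI impI)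
  fix n k :: nat
  assume "1 \<le> k" "k \<le> n + 1"
  then obtain p where "k = Suc p" "p \<le> n"
    using not0_implies_Suc by fastforce
  then show "det (Ekmat a n k) = (-1) ^ (n + 1 - k) *
      (dseq a (int k - 1) * dseq a (int n - int k + 1) - dseq a (int k - 2) * dseq a (int n - int k))"
    using det_Ekmat[of p n a] by (simp add: algebra_simps)
next
  show "dseq a (int k) = (deriv ^^ k) (\<lambda>x::real. 1 / (1 + a * x + a * x ^ 2 + x ^ 3)) 0 / fact k" for k
    by (rule dseq_eq_higher_deriv)
next
  fix \<alpha> \<beta> \<gamma> :: complex and k :: nat
  assume "\<alpha> ^ 3 + a * \<alpha> ^ 2 + a * \<alpha> + 1 = 0" "\<beta> ^ 3 + a * \<beta> ^ 2 + a * \<beta> + 1 = 0"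
    "\<gamma> ^ 3 + a * \<gamma> ^ 2 + a * \<gamma> + 1 = 0" "\<alpha> \<noteq> \<beta>" "\<beta> \<noteq> \<gamma>" "\<alpha> \<noteq> \<gamma>"
  then show "complex_of_real (dseq a (int k)) =
      1 / (\<alpha> ^ (k + 1) * (\<alpha> - \<beta>) * (\<gamma> - \<alpha>))
    + 1 / (\<beta> ^ (k + 1) * (\<alpha> - \<beta>) * (\<beta> - \<gamma>))
    + 1 / (\<gamma> ^ (k + 1) * (\<gamma> - \<alpha>) * (\<beta> - \<gamma>))"
    by (rule dseq_closed_form)
qed

end
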